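(* Let $n\ge0$ be an integer, $\omega\in\mathbb{R}$ and $\theta_0\in\mathbb{T}$, and write $\theta_j=\theta_0+j\omega$. Suppose that for each $0\le k\le n$ we are given $\Sigma_k\subset\mathbb{T}$ such that $(\Sigma_k,\theta_0)$ is an $(r_k,l_k,a_k)$-system. Then for every integer $t>0$, $$\frac{|\{0\le j<t:\theta_j\in\bigcup_{k=0}^n\Sigma_k\}|}{t}\le\sum_{k=0}^n\Big(\frac{l_k}{t}+\frac{l_k}{r_k+l_k}\Big)$$ and $$\frac{|\{0\le j<t:\theta_j\in\bigcup_{k=0}^n\Sigma_k\}|}{t}\le\sum_{k=0}^n\frac{l_k}{m_k+l_k},\qquad m_k=\min\{a_k,r_k\}.$$
   Context: Fix $\Sigma\subset\mathbb{T}$ and the orbit $\theta_j=\theta_0+j\omega$, $j\in\mathbb{Z}$. The set $\Sigma$ has minimal return time $r>0$ if whenever an orbit leaves $\Sigma$ it does not return for at least $r$ iterates, i.e. every maximal block of consecutive iterates outside $\Sigma$ lying between two visits to $\Sigma$ has length at least $r$. It has maximal confinement time $l>0$ if every block of consecutive iterates $\theta_i,\theta_{i+1},\dots$ all lying in $\Sigma$ has length at most $l$. The point $\theta_0$ has accumulation time $a\ge0$ with respect to $\Sigma$ if $\theta_i\notin\Sigma$ for all $0\le i<a$. If these hold, $(\Sigma,\theta_0)$ is called an $(r,l,a)$-system. *)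

theory Defs
  imports Complex_Main
begin

text \<open>The circle T = R/Z is represented by its fundamental domain [0,1);
  subsets of T are real sets contained in [0,1), and the point theta_0 + j*omega
  of T is represented by frac(theta_0 + j*omega).\<close>

definition orbit :: "real \<Rightarrow> real \<Rightarrow> int \<Rightarrow> real" where
  "orbit \<theta>0 \<omega> j = frac (\<theta>0 + of_int j * \<omega>)"

definition min_return_time :: "real set \<Rightarrow> real \<Rightarrow> real \<Rightarrow> nat \<Rightarrow> bool" where
  "min_return_time \<Sigma> \<theta>0 \<omega> r \<longleftrightarrow> 0 < r \<and>
     (\<forall>i k. i + 1 < k \<and> orbit \<theta>0 \<omega> i \<in> \<Sigma> \<and> orbit \<theta>0 \<omega> k \<in> \<Sigma> \<and>
        (\<forall>m. i < m \<and> m < k \<longrightarrow> orbit \<theta>0 \<omega> m \<notin> \<Sigma>)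
        \<longrightarrow> int r \<le> k - i - 1)"

definition max_confinement_time :: "real set \<Rightarrow> real \<Rightarrow> real \<Rightarrow> nat \<Rightarrow> bool" where
  "max_confinement_time \<Sigma> \<theta>0 \<omega> l \<longleftrightarrow> 0 < l \<and>
     (\<forall>i (L::nat). (\<forall>m<L. orbit \<theta>0 \<omega> (i + int m) \<in> \<Sigma>) \<longrightarrow> L \<le> l)"

definition accumulation_time :: "real set \<Rightarrow> real \<Rightarrow> real \<Rightarrow> nat \<Rightarrow> bool" where
  "accumulation_time \<Sigma> \<theta>0 \<omega> a \<longleftrightarrow> (\<forall>i::nat. i < a \<longrightarrow> orbit \<theta>0 \<omega> (int i) \<notin> \<Sigma>)"

definition rla_system :: "real set \<Rightarrow> real \<Rightarrow> real \<Rightarrow> nat \<Rightarrow> nat \<Rightarrow> nat \<Rightarrow> bool" where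
  "rla_system \<Sigma> \<theta>0 \<omega> r l a \<longleftrightarrow>
     min_return_time \<Sigma> \<theta>0 \<omega> r \<and> max_confinement_time \<Sigma> \<theta>0 \<omega> l \<and>
     accumulation_time \<Sigma> \<theta>0 \<omega> a"

end

theory Submission
  imports Defs
begin

(* Let V be the set of times j \<ge> 0 with theta_j \<in> \<Sigma>. It consists of runs of length at most l
  separated by gaps of length at least r, so every window of l + r consecutive times contains at
  most l visits. Cutting [0, t) into such windows plus one incomplete window gives the first
  bound; the second one uses windows of length l + m instead and places the incomplete window
  at the start, where the accumulation time makes its first m times empty. Finally the count for
  a union is at most the sum of the counts. *)

locale return_pattern =
  fixes V :: "nat set" and r l :: nat
  assumes run_le: "\<And>i L. (\<forall>m<L. i + m \<in> V) \<Longrightarrow> L \<le> l"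
    and gap_ge: "\<And>i k. i + 1 < k \<Longrightarrow> i \<in> V \<Longrightarrow> k \<in> V \<Longrightarrow> (\<forall>m. i < m \<and> m < k \<longrightarrow> m \<notin> V)
                   \<Longrightarrow> r \<le> k - i - 1"
begin

lemma run_exit:
  assumes "x \<in> V"
  obtains d where "0 < d" "d \<le> l" "\<forall>m<d. x + m \<in> V" "x + d \<notin> V"
proof -
  have "\<exists>d. x + d \<notin> V"
  proof (rule ccontr)
    assume "\<not> (\<exists>d. x + d \<notin> V)"
    then have "\<forall>m<Suc l. x + m \<in> V" by auto
    then have "Suc l \<le> l" by (rule run_le)
    then show False by simp
  qed
  define d where "d = (LEAST d. x + d \<notin> V)"
  have exit: "x + d \<notin> V" unfolding d_def by (rule LeastI_ex) fact
  have run: "\<forall>m<d. x + m \<in> V" using not_less_Least d_def by blast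
  show thesis
  proof
    show "0 < d" using exit assms by (cases d) auto
    show "d \<le> l" using run_le run by blast
  qed (use run exit in auto)
qed

lemma return_after_exit:
  assumes "i \<in> V" "Suc i \<notin> V" "w \<in> V" "i < w"
  shows "i + 1 + r \<le> w"
proof -
  define z where "z = (LEAST z. z \<in> V \<and> i < z)"
  have z: "z \<in> V" "i < z" using LeastI[of "\<lambda>z. z \<in> V \<and> i < z" w] assms by (auto simp: z_def)
  have "z \<le> w" using Least_le[of "\<lambda>z. z \<in> V \<and> i < z" w] assms by (simp add: z_def)
  moreover have "r \<le> z - i - 1"
  proof (rule gap_ge)
    show "i + 1 < z" using z assms(2) by (cases "z = Suc i") auto
    show "\<forall>m. i < m \<and> m < z \<longrightarrow> m \<notin> V" using not_less_Least z_def by blast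
  qed (use assms z in auto)
  ultimately show ?thesis using z by linarith
qed

lemma card_window_le:
  assumes "g \<le> r"
  shows "card (V \<inter> {s..<s + (l + g)}) \<le> l"
proof (cases "V \<inter> {s..<s + (l + g)} = {}")
  case False
  define W where "W = V \<inter> {s..<s + (l + g)}"
  define x where "x = Min W"
  have "finite W" "W \<noteq> {}" using False by (simp_all add: W_def)
  then have x: "x \<in> W" and x_min: "\<And>w. w \<in> W \<Longrightarrow> x \<le> w"
    by (simp_all add: x_def)
  then obtain d where d: "0 < d" "d \<le> l" "\<forall>m<d. x + m \<in> V" "x + d \<notin> V"
    using run_exit W_def by blast
  have "W \<subseteq> {x..<x + d} \<union> {x + d + g..<s + (l + g)}"
  proof
    fix w assume w: "w \<in> W"
    show "w \<in> {x..<x + d} \<union> {x + d + g..<s + (l + g)}"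
    proof (cases "w < x + d")
      case False
      have "x + d - 1 + 1 + r \<le> w"
        by (rule return_after_exit) (use d d(3)[rule_format, of "d - 1"] w False W_def in auto)
      then show ?thesis using w assms d(1) by (auto simp: W_def)
    qed (use x_min w in auto)
  qed
  then have "card W \<le> card ({x..<x + d} \<union> {x + d + g..<s + (l + g)})"
    by (intro card_mono) auto
  also have "\<dots> \<le> d + (s + (l + g) - (x + d + g))"
    by (rule order_trans[OF card_Un_le]) simp
  also have "\<dots> \<le> l" using x d(2) unfolding W_def by auto
  finally show ?thesis by (simp add: W_def)
qed simp

lemma card_windows_le:
  assumes "g \<le> r"
  shows "card (V \<inter> {s..<s + q * (l + g)}) \<le> q * l"
proof (induction q)
  case (Suc q)
  let ?s = "s + q * (l + g)"
  have "V \<inter> {s..<s + Suc q * (l + g)} = V \<inter> {s..<?s} \<union> V \<inter> {?s..<?s + (l + g)}"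
    by auto
  then have "card (V \<inter> {s..<s + Suc q * (l + g)})
      \<le> card (V \<inter> {s..<?s}) + card (V \<inter> {?s..<?s + (l + g)})"
    by (simp add: card_Un_le)
  also have "\<dots> \<le> q * l + l" using Suc card_window_le[OF assms, of ?s] by linarith
  finally show ?case by simp
qed simp

lemma card_visits_le:
  assumes "0 < l"
  shows "(l + r) * card (V \<inter> {0..<t}) \<le> l * t + l * (l + r)"
proof -
  define q where "q = Suc (t div (l + r))"
  have "t < q * (l + r)"
    using assms dividend_less_div_times[of "l + r" t] by (simp add: q_def)
  then have "card (V \<inter> {0..<t}) \<le> card (V \<inter> {0..<0 + q * (l + r)})"
    by (intro card_mono) auto
  also have "\<dots> \<le> q * l" by (rule card_windows_le) simp
  finally have "(l + r) * card (V \<inter> {0..<t}) \<le> (l + r) * (q * l)" by simp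
  also have "\<dots> = l * ((l + r) * (t div (l + r))) + l * (l + r)" by (simp add: q_def algebra_simps)
  also have "\<dots> \<le> l * t + l * (l + r)" by (simp add: div_times_less_eq_dividend)
  finally show ?thesis .
qed

lemma card_visits_le_delayed:
  assumes "0 < l" "m \<le> r" and delay: "\<And>j. j < m \<Longrightarrow> j \<notin> V"
  shows "(l + m) * card (V \<inter> {0..<t}) \<le> l * t"
proof -
  define q where "q = t div (l + m)"
  define e where "e = t mod (l + m)"
  have t: "t = e + q * (l + m)" using div_mult_mod_eq[of t "l + m"] by (simp add: q_def e_def)
  have "e < l + m" using assms(1) by (simp add: e_def)
  have head: "(l + m) * card (V \<inter> {0..<e}) \<le> l * e"
  proof -
    have "V \<inter> {0..<e} \<subseteq> {m..<e}" using delay by (metis IntE atLeastLessThan_iff leI subsetI)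
    then have "card (V \<inter> {0..<e}) \<le> e - m" using card_mono[of "{m..<e}"] by fastforce
    then have "(l + m) * card (V \<inter> {0..<e}) \<le> (l + m) * (e - m)" by simp
    also have "\<dots> \<le> l * e"
    proof (cases "m \<le> e")
      case True
      have "(l + m) * (e - m) = l * (e - m) + m * (e - m)" by (simp add: add_mult_distrib)
      also have "\<dots> \<le> l * (e - m) + m * l" 
      proof -
        have "e - m \<le> l" using \<open>e < l + m\<close> by linarith
        then show ?thesis by simp
      qed
      also have "\<dots> = l * e" using True by (simp add: diff_mult_distrib2)
      finally show ?thesis .
    qed simp
    finally show ?thesis .
  qed
  have "V \<inter> {0..<t} = V \<inter> {0..<e} \<union> V \<inter> {e..<e + q * (l + m)}" using t by auto
  then have "card (V \<inter> {0..<t}) \<le> card (V \<inter> {0..<e}) + card (V \<inter> {e..<e + q * (l + m)})"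
    by (simp add: card_Un_le)
  also have "\<dots> \<le> card (V \<inter> {0..<e}) + q * l" using card_windows_le[OF assms(2)] by simp
  finally have "(l + m) * card (V \<inter> {0..<t}) \<le> (l + m) * (card (V \<inter> {0..<e}) + q * l)"
    by simp
  also have "\<dots> = (l + m) * card (V \<inter> {0..<e}) + l * (q * (l + m))" by (simp add: algebra_simps)
  also have "\<dots> \<le> l * t" using head by (simp add: t algebra_simps)
  finally show ?thesis .
qed

lemma visit_density_le:
  assumes "0 < l" "0 < t"
  shows "real (card (V \<inter> {0..<t})) / real t \<le> real l / real t + real l / (real r + real l)"
proof -
  have "real (l + r) * real (card (V \<inter> {0..<t})) \<le> real l * real t + real l * real (l + r)"
    using card_visits_le[OF assms(1), of t] by (metis of_nat_add of_nat_le_iff of_nat_mult)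
  then show ?thesis using assms by (simp add: divide_simps) (simp add: algebra_simps)
qed

lemma visit_density_le_delayed:
  assumes "0 < l" "0 < t" "m \<le> r" "\<And>j. j < m \<Longrightarrow> j \<notin> V"
  shows "real (card (V \<inter> {0..<t})) / real t \<le> real l / (real m + real l)"
proof -
  have "real (l + m) * real (card (V \<inter> {0..<t})) \<le> real l * real t"
    using card_visits_le_delayed[OF assms(1,3,4), of t] by (metis of_nat_le_iff of_nat_mult)
  then show ?thesis using assms by (simp add: divide_simps) (simp add: algebra_simps)
qed

end

definition visits :: "real set \<Rightarrow> real \<Rightarrow> real \<Rightarrow> nat set" where
  "visits \<Sigma> \<theta>0 \<omega> = {j. orbit \<theta>0 \<omega> (int j) \<in> \<Sigma>}"

lemma rla_system_return_pattern:
  assumes "rla_system \<Sigma> \<theta>0 \<omega> r l a"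
  shows "return_pattern (visits \<Sigma> \<theta>0 \<omega>) r l"
proof
  have ret: "min_return_time \<Sigma> \<theta>0 \<omega> r" and conf: "max_confinement_time \<Sigma> \<theta>0 \<omega> l"
    using assms by (auto simp: rla_system_def)
  show "L \<le> l" if "\<forall>m<L. i + m \<in> visits \<Sigma> \<theta>0 \<omega>" for i L
    using conf that unfolding max_confinement_time_def visits_def by (metis mem_Collect_eq of_nat_add)
  show "r \<le> k - i - 1"
    if "i + 1 < k" "i \<in> visits \<Sigma> \<theta>0 \<omega>" "k \<in> visits \<Sigma> \<theta>0 \<omega>"
      and gap: "\<forall>m. i < m \<and> m < k \<longrightarrow> m \<notin> visits \<Sigma> \<theta>0 \<omega>" for i k
  proof -
    have "orbit \<theta>0 \<omega> m \<notin> \<Sigma>" if "int i < m" "m < int k" for m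
    proof -
      have "i < nat m \<and> nat m < k" using that by linarith
      then have "nat m \<notin> visits \<Sigma> \<theta>0 \<omega>" using gap by blast
      moreover have "int (nat m) = m" using that by simp
      ultimately show ?thesis by (simp add: visits_def)
    qed
    then have "int r \<le> int k - int i - 1"
      using ret \<open>i + 1 < k\<close> \<open>i \<in> _\<close> \<open>k \<in> _\<close> unfolding min_return_time_def visits_def by auto
    then show ?thesis by linarith
  qed
qed

lemma rla_system_confinement_pos: "rla_system \<Sigma> \<theta>0 \<omega> r l a \<Longrightarrow> 0 < l"
  by (simp add: rla_system_def max_confinement_time_def)

lemma rla_system_not_visited_before:
  "rla_system \<Sigma> \<theta>0 \<omega> r l a \<Longrightarrow> j < a \<Longrightarrow> j \<notin> visits \<Sigma> \<theta>0 \<omega>"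
  by (simp add: rla_system_def accumulation_time_def visits_def)

lemma card_UN_div_le:
  assumes "finite K" "0 < t"
  shows "real (card (\<Union>k\<in>K. V k \<inter> {0..<t})) / real t \<le> (\<Sum>k\<in>K. real (card (V k \<inter> {0..<t})) / real t)"
proof -
  have "real (card (\<Union>k\<in>K. V k \<inter> {0..<t})) \<le> (\<Sum>k\<in>K. real (card (V k \<inter> {0..<t})))"
    using card_UN_le[OF assms(1), of "\<lambda>k. V k \<inter> {0..<t}"] by (metis of_nat_le_iff of_nat_sum)
  then show ?thesis using assms by (simp add: sum_divide_distrib[symmetric] divide_right_mono)
qed

theorem lemmaB1:
  fixes n :: nat and \<omega> \<theta>0 :: real and \<Sigma> :: "nat \<Rightarrow> real set"
    and r l a :: "nat \<Rightarrow> nat" and t :: nat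
  assumes "\<theta>0 \<in> {0..<1}"
    and "\<And>k. k \<le> n \<Longrightarrow> \<Sigma> k \<subseteq> {0..<1}"
    and "\<And>k. k \<le> n \<Longrightarrow> rla_system (\<Sigma> k) \<theta>0 \<omega> (r k) (l k) (a k)"
    and "0 < t"
  shows "real (card {j \<in> {0..<t}. orbit \<theta>0 \<omega> (int j) \<in> (\<Union>k\<in>{0..n}. \<Sigma> k)}) / real t
           \<le> (\<Sum>k=0..n. real (l k) / real t + real (l k) / (real (r k) + real (l k)))
       \<and> real (card {j \<in> {0..<t}. orbit \<theta>0 \<omega> (int j) \<in> (\<Union>k\<in>{0..n}. \<Sigma> k)}) / real t
           \<le> (\<Sum>k=0..n. real (l k) / (real (min (a k) (r k)) + real (l k)))"
proof -
  define V where "V k = visits (\<Sigma> k) \<theta>0 \<omega>" for k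
  define density where "density k = real (card (V k \<inter> {0..<t})) / real t" for k
  have visited: "{j \<in> {0..<t}. orbit \<theta>0 \<omega> (int j) \<in> (\<Union>k\<in>{0..n}. \<Sigma> k)}
      = (\<Union>k\<in>{0..n}. V k \<inter> {0..<t})"
    by (auto simp: V_def visits_def)
  have union: "real (card {j \<in> {0..<t}. orbit \<theta>0 \<omega> (int j) \<in> (\<Union>k\<in>{0..n}. \<Sigma> k)}) / real t
      \<le> (\<Sum>k=0..n. density k)"
    unfolding visited density_def by (rule card_UN_div_le) (simp_all add: \<open>0 < t\<close>)
  have "density k \<le> real (l k) / real t + real (l k) / (real (r k) + real (l k))
      \<and> density k \<le> real (l k) / (real (min (a k) (r k)) + real (l k))" if "k \<le> n" for k
  proof -
    note sys = assms(3)[OF that]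
    interpret return_pattern "V k" "r k" "l k"
      unfolding V_def by (rule rla_system_return_pattern[OF sys])
    show ?thesis
      using visit_density_le visit_density_le_delayed[where m = "min (a k) (r k)"]
        rla_system_confinement_pos[OF sys] rla_system_not_visited_before[OF sys] \<open>0 < t\<close>
      by (auto simp: density_def V_def)
  qed
  then show ?thesis
    using union sum_mono[of "{0..n}" density] by (meson atLeastAtMost_iff order_trans)
qed

end
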